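(* Let $K\subset M^{m\times n}$ be a three-dimensional subspace without Rank-$1$ connections, with $K=P_K(\mathbb{R}^3)$ where $P_K(z)=(a_{ij}\cdot z)_{ij}$, $a_{ij}\in\mathbb{R}^3$, is a linear isomorphism onto $K$. If $\dim\mathrm{Span}\{a_{i_0l}:l=1,\dots,n\}=3$ for some $i_0$, or $\dim\mathrm{Span}\{a_{lj_0}:l=1,\dots,m\}=3$ for some $j_0$, then there exists $\beta\in\mathbb{R}^{q_0}\setminus\{0\}$ with $\sum_{k=1}^{q_0}\beta_kM_k(X)\ge0$ for all $X\in K$ and $\sum_k\beta_kM_k\not\equiv0$ on $K$, where $M_1,\dots,M_{q_0}$ are all the $2\times2$ minors of $m\times n$ matrices.
   Context: A set has Rank-$1$ connections if it contains $A\ne B$ with $\mathrm{Rank}(A-B)=1$. *)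

theory Defs
  imports "HOL-Analysis.Analysis"
begin

text \<open>Real m x n matrices are rendered as real^'n^'m (m rows indexed by 'm, n columns by 'n).
  The index types carry a linear order so that the 2x2 minors can be enumerated
  by pairs i1 < i2 of rows and j1 < j2 of columns.\<close>

definition has_rank1_connections :: "(real^'n^'m) set \<Rightarrow> bool" where
  "has_rank1_connections S \<longleftrightarrow> (\<exists>A\<in>S. \<exists>B\<in>S. A \<noteq> B \<and> rank (A - B) = 1)"

definition PK :: "('m \<Rightarrow> 'n \<Rightarrow> real^3) \<Rightarrow> real^3 \<Rightarrow> real^'n^'m" where
  "PK a z = (\<chi> i j. a i j \<bullet> z)"

definition minor_idx :: "('m::linorder \<times> 'm \<times> 'n::linorder \<times> 'n) set" where
  "minor_idx = {(i1, i2, j1, j2). i1 < i2 \<and> j1 < j2}"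

definition minor2 :: "('m \<times> 'm \<times> 'n \<times> 'n) \<Rightarrow> real^'n^'m \<Rightarrow> real" where
  "minor2 k X = (case k of (i1, i2, j1, j2) \<Rightarrow>
      X$i1$j1 * X$i2$j2 - X$i1$j2 * X$i2$j1)"

end

theory Submission
  imports Defs
begin

text \<open>
  Suppose no nontrivial combination of the minors is nonnegative on \<open>K\<close>. On \<open>K = P_K(\<real>^3)\<close>
  each minor is a quadratic form \<open>z \<mapsto> z \<bullet> Q_k z\<close>, and a hyperplane separating the span of
  the \<open>Q_k\<close> from the convex hull of the matrices \<open>z z^T\<close> with \<open>|z| = 1\<close> yields a positive
  definite \<open>S\<close> with \<open>S \<bullet> Q_k = 0\<close> for all \<open>k\<close>, that is \<open>a_ij \<bullet> S a_i'l = a_il \<bullet> S a_i'j\<close> for all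
  indices. If the row \<open>a_i0\<close> spans \<open>\<real>^3\<close>, these relations make the maps \<open>T_i : a_i0l \<mapsto> a_il\<close>
  well defined, self-adjoint for \<open>S\<close> and pairwise commuting, so they have a common eigenvector
  \<open>y\<close>. For \<open>z = S y\<close> every row of \<open>P_K(z)\<close> is then a multiple of the nonzero row \<open>i0\<close>: a
  rank-one matrix in \<open>K\<close>. The column case is the row case for the transposed family.
\<close>

section \<open>Common eigenvectors of commuting self-adjoint maps\<close>

definition inner_product_form :: "('a::real_vector \<Rightarrow> 'a \<Rightarrow> real) \<Rightarrow> bool" where
  "inner_product_form B \<longleftrightarrow>
     bilinear B \<and> (\<forall>x y. B x y = B y x) \<and> (\<forall>x. x \<noteq> 0 \<longrightarrow> 0 < B x x)"

lemma inner_product_formD: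
  assumes "inner_product_form B"
  shows "bilinear B" "B x y = B y x" "x \<noteq> 0 \<Longrightarrow> 0 < B x x"
  using assms by (auto simp: inner_product_form_def)

lemma inner_product_form_eq_0_iff:
  assumes "inner_product_form B"
  shows "B x x = 0 \<longleftrightarrow> x = 0"
  using inner_product_formD[OF assms] bilinear_lzero by fastforce

lemma inner_product_form_nondegenerate:
  fixes B :: "'a::euclidean_space \<Rightarrow> 'a \<Rightarrow> real"
  assumes B: "inner_product_form B" and sp: "span (range u) = UNIV"
    and orth: "\<And>j. B (u j) w = 0"
  shows "w = 0"
proof -
  have "B w w = (\<lambda>_ _. 0) w w"
    by (rule bilinear_eq[of B _ UNIV "range u" "{w}" "{w}"])
       (use inner_product_formD(1)[OF B] sp orth in \<open>auto simp: bilinear_def linear_iff intro: span_base\<close>)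
  thus ?thesis using inner_product_form_eq_0_iff[OF B] by simp
qed

lemma nonpos_if_quadratic_nonneg:
  fixes c d :: real
  assumes "\<And>t. t > 0 \<Longrightarrow> 0 \<le> t\<^sup>2 * d - 2 * t * c"
  shows "c \<le> 0"
proof (rule ccontr)
  assume "\<not> c \<le> 0"
  define t where "t = c / (\<bar>d\<bar> + 1)"
  have t: "t > 0" using \<open>\<not> c \<le> 0\<close> by (simp add: t_def)
  have "0 \<le> t * (t * d - 2 * c)" using assms[OF t] by (simp add: power2_eq_square algebra_simps)
  hence "2 * c \<le> t * d" using t by (simp add: zero_le_mult_iff)
  also have "t * d \<le> t * \<bar>d\<bar>" using t by (simp add: mult_left_mono)
  also have "t * \<bar>d\<bar> < c" using \<open>\<not> c \<le> 0\<close> by (simp add: t_def field_simps)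
  finally show False using \<open>\<not> c \<le> 0\<close> by simp
qed

lemma eigenvector_if_rayleigh_maximal:
  fixes B :: "'a::real_vector \<Rightarrow> 'a \<Rightarrow> real" and T :: "'a \<Rightarrow> 'a"
  assumes B: "inner_product_form B" and lin: "linear T"
    and sa: "\<And>x y. B (T x) y = B x (T y)"
    and W: "subspace W" and inv: "\<And>x. x \<in> W \<Longrightarrow> T x \<in> W"
    and max: "\<And>y. y \<in> W \<Longrightarrow> B (T y) y \<le> l * B y y"
    and x: "x \<in> W" "B (T x) x = l * B x x"
  shows "T x = l *\<^sub>R x"
proof -
  have bil: "bilinear B" and sym: "\<And>x y. B x y = B y x" and pos: "\<And>x. x \<noteq> 0 \<Longrightarrow> 0 < B x x"
    using inner_product_formD[OF B] by auto
  note Bsimps = bilinear_ladd[OF bil] bilinear_radd[OF bil] bilinear_lsub[OF bil]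
    bilinear_rsub[OF bil] bilinear_lmul[OF bil] bilinear_rmul[OF bil]
  define r where "r = l *\<^sub>R x - T x"
  txt \<open>Along \<open>x - t r\<close> the nonnegative form \<open>l B y y - B (T y) y\<close> vanishes at \<open>t = 0\<close> and
    has slope \<open>-2 B r r\<close> there.\<close>
  have "B r r \<le> 0"
  proof (rule nonpos_if_quadratic_nonneg)
    fix t :: real assume "t > 0"
    have "x - t *\<^sub>R r \<in> W" using W x inv by (simp add: r_def subspace_diff subspace_scale)
    hence "0 \<le> l * B (x - t *\<^sub>R r) (x - t *\<^sub>R r) - B (T (x - t *\<^sub>R r)) (x - t *\<^sub>R r)"
      using max by fastforce
    also have "\<dots> = (l * B x x - B (T x) x)
        - t * (l * B x r + l * B r x - B (T x) r - B (T r) x) + t\<^sup>2 * (l * B r r - B (T r) r)"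
      using lin by (simp add: Bsimps linear_diff linear_scale algebra_simps power2_eq_square)
    also have "l * B x r + l * B r x - B (T x) r - B (T r) x = 2 * B r r"
    proof -
      have "B r r = l * B x r - B (T x) r" by (subst (1) r_def) (simp add: Bsimps)
      moreover have "B r x = B x r" "B (T r) x = B (T x) r" using sa sym by metis+
      ultimately show ?thesis by simp
    qed
    finally show "0 \<le> t\<^sup>2 * (l * B r r - B (T r) r) - 2 * t * B r r" using x(2) by simp
  qed
  hence "r = 0" using pos by force
  thus ?thesis unfolding r_def by (metis eq_iff_diff_eq_0)
qed

lemma selfadjoint_eigenvector_in_invariant_subspace:
  fixes B :: "'a::euclidean_space \<Rightarrow> 'a \<Rightarrow> real" and T :: "'a \<Rightarrow> 'a"
  assumes B: "inner_product_form B" and lin: "linear T"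
    and sa: "\<And>x y. B (T x) y = B x (T y)"
    and W: "subspace W" and w: "w \<in> W" "w \<noteq> 0" and inv: "\<And>x. x \<in> W \<Longrightarrow> T x \<in> W"
  shows "\<exists>x\<in>W. x \<noteq> 0 \<and> (\<exists>c. T x = c *\<^sub>R x)"
proof -
  have bil: "bilinear B" and pos: "\<And>x. x \<noteq> 0 \<Longrightarrow> 0 < B x x"
    using inner_product_formD[OF B] by auto
  define C where "C = W \<inter> sphere 0 1"
  define f where "f y = B (T y) y / B y y" for y
  have "compact C"
    unfolding C_def Int_commute[of W]
    by (intro compact_Int_closed compact_sphere closed_subspace W)
  moreover have "w /\<^sub>R norm w \<in> C"
    using w W unfolding C_def by (simp add: subspace_scale)
  moreover have "continuous_on C f"
  proof -
    have "continuous_on C T" using lin by (simp add: linear_continuous_on linear_conv_bounded_linear)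
    moreover have "B y y \<noteq> 0" if "y \<in> C" for y
      using inner_product_form_eq_0_iff[OF B, of y] that unfolding C_def by auto
    ultimately show ?thesis unfolding f_def
      by (intro continuous_on_divide bilinear_continuous_on_compose[OF _ _ bil] continuous_on_id) auto
  qed
  ultimately obtain x where x: "x \<in> C" and xmax: "\<And>y. y \<in> C \<Longrightarrow> f y \<le> f x"
    using continuous_attains_sup[of C f] by blast
  have xW: "x \<in> W" and x0: "x \<noteq> 0" using x unfolding C_def by auto
  have f_scale: "f (c *\<^sub>R y) = f y" if "c \<noteq> 0" for c y
    using that lin by (simp add: f_def bilinear_lmul[OF bil] bilinear_rmul[OF bil] linear_scale)
  have fx_max: "B (T y) y \<le> f x * B y y" if "y \<in> W" for y
  proof (cases "y = 0")
    case True thus ?thesis using lin by (simp add: bilinear_lzero[OF bil] linear_0)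
  next
    case False
    have "y /\<^sub>R norm y \<in> C" using that False W unfolding C_def by (simp add: subspace_scale)
    hence "f y \<le> f x" using xmax[of "y /\<^sub>R norm y"] f_scale[of "inverse (norm y)" y] False by simp
    thus ?thesis using pos[OF False] by (simp add: f_def divide_le_eq)
  qed
  have "B (T x) x = f x * B x x" using pos[OF x0] by (simp add: f_def)
  hence "T x = f x *\<^sub>R x" using eigenvector_if_rayleigh_maximal[OF B lin sa W inv fx_max xW] by blast
  thus ?thesis using xW x0 by blast
qed

lemma common_eigenvector_in_invariant_subspace:
  fixes B :: "'a::euclidean_space \<Rightarrow> 'a \<Rightarrow> real" and F :: "('a \<Rightarrow> 'a) set"
  assumes B: "inner_product_form B" and "finite F"
    and "\<And>T. T \<in> F \<Longrightarrow> linear T"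
    and "\<And>T x y. T \<in> F \<Longrightarrow> B (T x) y = B x (T y)"
    and "\<And>T T' x. T \<in> F \<Longrightarrow> T' \<in> F \<Longrightarrow> T (T' x) = T' (T x)"
    and "subspace W" "w \<in> W" "w \<noteq> 0" "\<And>T x. T \<in> F \<Longrightarrow> x \<in> W \<Longrightarrow> T x \<in> W"
  shows "\<exists>y\<in>W. y \<noteq> 0 \<and> (\<forall>T\<in>F. \<exists>c. T y = c *\<^sub>R y)"
  using assms(2-)
proof (induction F arbitrary: W w rule: finite_induct)
  case empty
  then show ?case by blast
next
  case (insert T F)
  have linT: "linear T" using insert.prems(1) by blast
  obtain x l where x: "x \<in> W" "x \<noteq> 0" "T x = l *\<^sub>R x"
    using selfadjoint_eigenvector_in_invariant_subspace[OF B linT insert.prems(2)[OF insertI1]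
        insert.prems(4-6) insert.prems(7)[OF insertI1]] by blast
  define E where "E = {y \<in> W. T y = l *\<^sub>R y}"
  have sE: "subspace E"
    using insert.prems(4) linT unfolding E_def subspace_def
    by (auto simp: subspace_add subspace_scale subspace_0 linear_0 linear_add linear_scale algebra_simps)
  have xE: "x \<in> E" using x unfolding E_def by blast
  have invE: "T' y \<in> E" if "T' \<in> F" "y \<in> E" for T' y
  proof -
    have "T (T' y) = T' (T y)" using insert.prems(3)[of T T' y] that(1) by blast
    also have "\<dots> = l *\<^sub>R T' y"
      using that insert.prems(1)[of T'] unfolding E_def by (simp add: linear_scale)
    finally show ?thesis using that insert.prems(7)[of T' y] unfolding E_def by simp
  qed
  have "\<exists>y\<in>E. y \<noteq> 0 \<and> (\<forall>T\<in>F. \<exists>c. T y = c *\<^sub>R y)"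
    by (rule insert.IH[of E x]) (simp_all add: insert.prems(1-3) sE xE x invE)
  then obtain y where "y \<in> E" "y \<noteq> 0" "\<forall>T\<in>F. \<exists>c. T y = c *\<^sub>R y" by blast
  thus ?case unfolding E_def by blast
qed

lemma sum_axis_scaleR: "(\<Sum>l'\<in>UNIV. axis l (1::real) $ l' *\<^sub>R w l') = (w l :: 'a::real_vector)"
proof -
  have "axis l (1::real) $ l' *\<^sub>R w l' = (if l' = l then w l else 0)" for l'
    by (simp add: axis_def)
  thus ?thesis by simp
qed

lemma linear_extension_of_family:
  fixes u :: "'c::finite \<Rightarrow> 'a::euclidean_space" and v :: "'c \<Rightarrow> 'b::euclidean_space"
  assumes sp: "span (range u) = UNIV"
    and ker: "\<And>d :: real^'c. (\<Sum>l\<in>UNIV. d$l *\<^sub>R u l) = 0 \<Longrightarrow> (\<Sum>l\<in>UNIV. d$l *\<^sub>R v l) = 0"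
  shows "\<exists>T. linear T \<and> (\<forall>l. T (u l) = v l)"
proof -
  define U where "U d = (\<Sum>l\<in>UNIV. d$l *\<^sub>R u l)" for d :: "real^'c"
  define V where "V d = (\<Sum>l\<in>UNIV. d$l *\<^sub>R v l)" for d :: "real^'c"
  have linU: "linear U" and linV: "linear V"
    unfolding U_def V_def by (auto intro!: linearI simp: sum.distrib scaleR_add_left scaleR_sum_right)
  have "range u \<subseteq> range U"
  proof clarify
    fix l show "u l \<in> range U" by (rule range_eqI[where x="axis l 1"]) (simp add: U_def sum_axis_scaleR)
  qed
  moreover have "subspace (range U)" using linU by (simp add: linear_subspace_image subspace_UNIV)
  ultimately have "span (range u) \<subseteq> range U" by (rule span_minimal)
  hence "surj U" using sp by blast
  then obtain R where linR: "linear R" and UR: "U \<circ> R = id"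
    using linear_surjective_right_inverse[OF linU] by blast
  have VRU: "V (R (U d)) = V d" for d
  proof -
    have "U (R (U d) - d) = 0" using UR linU by (simp add: linear_diff pointfree_idE)
    hence "V (R (U d) - d) = 0" using ker[of "R (U d) - d"] by (simp add: U_def V_def)
    thus ?thesis using linV by (simp add: linear_diff)
  qed
  hence "(V \<circ> R) (u l) = v l" for l
    using VRU[of "axis l 1"] by (simp add: U_def V_def sum_axis_scaleR)
  thus ?thesis using linear_compose[OF linR linV] by blast
qed

lemma bilinear_compose_linear:
  assumes B: "bilinear B" and L: "linear L"
  shows bilinear_compose_linear_left: "bilinear (\<lambda>x y. B (L x) y)"
    and bilinear_compose_linear_right: "bilinear (\<lambda>x y. B x (L y))"
proof -
  have "linear (\<lambda>x. B (L x) y)" "linear (\<lambda>y. B x (L y))" for x y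
    using linear_compose[OF L, of "\<lambda>x. B x y"] linear_compose[OF L, of "B x"] B
    by (simp_all add: bilinear_def o_def)
  thus "bilinear (\<lambda>x y. B (L x) y)" "bilinear (\<lambda>x y. B x (L y))"
    using B by (simp_all add: bilinear_def)
qed

lemma row_map_exists:
  fixes B :: "'a::euclidean_space \<Rightarrow> 'a \<Rightarrow> real" and a :: "'r \<Rightarrow> 'c::finite \<Rightarrow> 'a"
  assumes B: "inner_product_form B"
    and rel: "\<And>i i' j l. B (a i j) (a i' l) = B (a i l) (a i' j)"
    and sp: "span (range (a i0)) = UNIV"
  shows "\<exists>T. linear T \<and> (\<forall>l. T (a i0 l) = a i l)"
proof (rule linear_extension_of_family[OF sp])
  have linB: "linear (B x)" for x using inner_product_formD(1)[OF B] by (simp add: bilinear_def)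
  fix d :: "real^'c" assume d: "(\<Sum>l\<in>UNIV. d$l *\<^sub>R a i0 l) = 0"
  show "(\<Sum>l\<in>UNIV. d$l *\<^sub>R a i l) = 0"
  proof (rule inner_product_form_nondegenerate[OF B sp])
    fix j
    have "B (a i0 j) (\<Sum>l\<in>UNIV. d$l *\<^sub>R a i l) = (\<Sum>l\<in>UNIV. d$l * B (a i0 j) (a i l))"
      by (simp add: linear_sum[OF linB] linear_scale[OF linB])
    also have "\<dots> = (\<Sum>l\<in>UNIV. d$l * B (a i j) (a i0 l))"
      using rel inner_product_formD(2)[OF B] by metis
    also have "\<dots> = B (a i j) (\<Sum>l\<in>UNIV. d$l *\<^sub>R a i0 l)"
      by (simp add: linear_sum[OF linB] linear_scale[OF linB])
    finally show "B (a i0 j) (\<Sum>l\<in>UNIV. d$l *\<^sub>R a i l) = 0"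
      using d linear_0[OF linB] by simp
  qed
qed

lemma selfadjoint_row_maps:
  fixes B :: "'a::euclidean_space \<Rightarrow> 'a \<Rightarrow> real" and a :: "'r \<Rightarrow> 'c::finite \<Rightarrow> 'a"
  assumes B: "inner_product_form B"
    and rel: "\<And>i i' j l. B (a i j) (a i' l) = B (a i l) (a i' j)"
    and sp: "span (range (a i0)) = UNIV"
  obtains T where "\<And>i. linear (T i)" "\<And>i l. T i (a i0 l) = a i l"
    "\<And>i x y. B (T i x) y = B x (T i y)" "\<And>i i' x. T i (T i' x) = T i' (T i x)"
proof -
  have bil: "bilinear B" and sym: "\<And>x y. B x y = B y x"
    using inner_product_formD[OF B] by auto
  have "\<exists>T. linear T \<and> (\<forall>l. T (a i0 l) = a i l)" for i
    by (rule row_map_exists[of B a, OF B rel sp])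
  then obtain T where linT: "\<And>i. linear (T i)" and Ta: "\<And>i l. T i (a i0 l) = a i l"
    by metis
  have sa: "B (T i x) y = B x (T i y)" for i x y
  proof (rule bilinear_eq[of "\<lambda>x y. B (T i x) y" "\<lambda>x y. B x (T i y)" UNIV "range (a i0)" UNIV "range (a i0)"])
    show "bilinear (\<lambda>x y. B (T i x) y)" "bilinear (\<lambda>x y. B x (T i y))"
      using bilinear_compose_linear[OF bil linT] by simp_all
    fix x y assume "x \<in> range (a i0)" "y \<in> range (a i0)"
    then obtain l l' where "x = a i0 l" "y = a i0 l'" by blast
    thus "B (T i x) y = B x (T i y)" using rel sym Ta by metis
  qed (use sp in auto)
  have "B (T i (T i' x)) y = B (T i' (T i x)) y" for i i' x y
  proof (rule bilinear_eq[of "\<lambda>x y. B (T i (T i' x)) y" "\<lambda>x y. B (T i' (T i x)) y"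
        UNIV "range (a i0)" UNIV "range (a i0)"])
    show "bilinear (\<lambda>x y. B (T i (T i' x)) y)" "bilinear (\<lambda>x y. B (T i' (T i x)) y)"
      using bilinear_compose_linear_left[OF bil linear_compose[OF linT linT]]
      by (simp_all add: o_def)
    fix x y assume "x \<in> range (a i0)" "y \<in> range (a i0)"
    then obtain l l' where "x = a i0 l" "y = a i0 l'" by blast
    thus "B (T i (T i' x)) y = B (T i' (T i x)) y"
      using sa rel sym Ta by metis
  qed (use sp in auto)
  hence "T i (T i' x) = T i' (T i x)" for i i' x
    using inner_product_form_eq_0_iff[OF B, of "T i (T i' x) - T i' (T i x)"]
    by (simp add: bilinear_lsub[OF bil] bilinear_rsub[OF bil])
  with linT Ta sa show thesis by (rule that)
qed

lemma exists_direction_with_proportional_rows: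
  fixes B :: "'a::euclidean_space \<Rightarrow> 'a \<Rightarrow> real" and a :: "'r::finite \<Rightarrow> 'c::finite \<Rightarrow> 'a"
  assumes B: "inner_product_form B"
    and rel: "\<And>i i' j l. B (a i j) (a i' l) = B (a i l) (a i' j)"
    and sp: "span (range (a i0)) = UNIV"
  shows "\<exists>y. y \<noteq> 0 \<and> (\<forall>i. \<exists>c. \<forall>l. B (a i l) y = c * B (a i0 l) y)"
proof -
  obtain T where linT: "\<And>i. linear (T i)" and Ta: "\<And>i l. T i (a i0 l) = a i l"
    and sa: "\<And>i x y. B (T i x) y = B x (T i y)" and comm: "\<And>i i' x. T i (T i' x) = T i' (T i x)"
    using selfadjoint_row_maps[of B a i0, OF B rel sp] by blast
  obtain b :: 'a where "b \<in> Basis" using nonempty_Basis by blast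
  hence "b \<noteq> 0" by auto
  have "\<exists>y\<in>UNIV. y \<noteq> 0 \<and> (\<forall>T'\<in>range T. \<exists>c. T' y = c *\<^sub>R y)"
    by (rule common_eigenvector_in_invariant_subspace[OF B, of "range T" UNIV b])
       (auto simp: linT sa comm \<open>b \<noteq> 0\<close>)
  then obtain y where "y \<noteq> 0" and y: "\<And>i. \<exists>c. T i y = c *\<^sub>R y" by blast
  have "\<exists>c. \<forall>l. B (a i l) y = c * B (a i0 l) y" for i
  proof -
    obtain c where "T i y = c *\<^sub>R y" using y by blast
    hence "B (a i l) y = c * B (a i0 l) y" for l
      using sa[of i "a i0 l" y] Ta[of i l] bilinear_rmul[OF inner_product_formD(1)[OF B]] by simp
    thus ?thesis by blast
  qed
  with \<open>y \<noteq> 0\<close> show ?thesis by blast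
qed

section \<open>Outer products and a separation argument\<close>

definition outer :: "real^'k \<Rightarrow> real^'k \<Rightarrow> real^'k^'k" where
  "outer u v = (\<chi> i j. u$i * v$j)"

lemma inner_outer: "M \<bullet> outer u v = u \<bullet> (M *v v)"
  unfolding inner_vec_def outer_def matrix_vector_mult_def inner_real_def
  by (simp add: sum_distrib_left mult.commute mult.left_commute)

lemma transpose_outer: "transpose (outer u v) = outer v u"
  by (simp add: transpose_def outer_def vec_eq_iff mult.commute)

lemma outer_mult: "outer u v *v z = (v \<bullet> z) *\<^sub>R u"
  unfolding vec_eq_iff outer_def matrix_vector_mult_def inner_vec_def inner_real_def
  by (simp add: sum_distrib_left sum_distrib_right mult.commute mult.left_commute)

lemma inner_transpose: "transpose A \<bullet> M = A \<bullet> transpose (M :: real^'n^'m)"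
  unfolding inner_vec_def transpose_def inner_real_def
  by (simp, subst sum.swap) (rule refl)

lemma diag_eq_inner_outer_axis: "M $ i $ i = M \<bullet> outer (axis i 1) (axis i 1)"
  by (simp add: inner_outer matrix_vector_mult_basis column_def inner_axis')

lemma bilinear_matrix_form:
  fixes S :: "real^'n^'m"
  shows "bilinear (\<lambda>x y. x \<bullet> (S *v y))"
  by (simp add: bilinear_def linear_iff inner_add_left inner_add_right
      matrix_vector_right_distrib matrix_vector_mult_scaleR)

lemma inner_product_form_matrixI:
  fixes S :: "real^'n^'n"
  assumes "transpose S = S" and "\<And>x. x \<noteq> 0 \<Longrightarrow> 0 < x \<bullet> (S *v x)"
  shows "inner_product_form (\<lambda>x y. x \<bullet> (S *v y))"
proof -
  have "y \<bullet> (S *v x) = x \<bullet> (S *v y)" for x y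
  proof -
    have "y \<bullet> (S *v x) = transpose S \<bullet> outer y x" by (simp add: assms(1) inner_outer)
    also have "\<dots> = x \<bullet> (S *v y)" unfolding inner_transpose transpose_outer by (rule inner_outer)
    finally show ?thesis .
  qed
  thus ?thesis using assms(2) bilinear_matrix_form by (simp add: inner_product_form_def)
qed

lemma rank_one_if_rows_proportional:
  fixes X :: "real^'n^'m"
  assumes r0: "X$i0 \<noteq> 0" and pr: "\<And>i. \<exists>t. X$i = t *\<^sub>R X$i0"
  shows "rank X = 1"
proof -
  have rw: "row i X = X$i" for i by (simp add: row_def vec_eq_iff)
  have "rows X \<subseteq> span {X$i0}"
    unfolding rows_def rw
  proof clarify
    fix i obtain t where "X$i = t *\<^sub>R X$i0" using pr by blast
    thus "X$i \<in> span {X$i0}" by (simp add: span_mul span_base)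
  qed
  moreover have "X$i0 \<in> rows X" unfolding rows_def rw by blast
  ultimately have "span (rows X) = span {X$i0}"
    unfolding span_eq by (simp add: span_base)
  hence "dim (rows X) = dim {X$i0}" by (metis dim_span)
  thus ?thesis using r0 by (simp add: row_rank_def dim_singleton)
qed

lemma trace_eq_sum_inner_outer_axis: "trace M = (\<Sum>i\<in>UNIV. M \<bullet> outer (axis i 1) (axis i 1))"
  by (simp add: trace_def diag_eq_inner_outer_axis)

lemma span_image_representation:
  fixes f :: "'i \<Rightarrow> 'a::real_vector"
  assumes "finite I" "M \<in> span (f ` I)"
  shows "\<exists>\<beta>. M = (\<Sum>k\<in>I. \<beta> k *\<^sub>R f k)"
  using assms(2)
proof (induction rule: span_induct_alt)
  case base
  show ?case by (rule exI[of _ "\<lambda>_. 0"]) simp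
next
  case (step c x y)
  then obtain k0 \<beta> where k0: "k0 \<in> I" "x = f k0" and y: "y = (\<Sum>k\<in>I. \<beta> k *\<^sub>R f k)" by blast
  have "(if k = k0 then c else 0) *\<^sub>R f k = (if k = k0 then c *\<^sub>R f k0 else 0)" for k
    by simp
  hence "(\<Sum>k\<in>I. (if k = k0 then c else 0) *\<^sub>R f k) = c *\<^sub>R x"
    using assms(1) k0 by simp
  hence "c *\<^sub>R x + y = (\<Sum>k\<in>I. (\<beta> k + (if k = k0 then c else 0)) *\<^sub>R f k)"
    by (simp add: y scaleR_add_left sum.distrib)
  then show ?case by (rule exI[of _ "\<lambda>k. \<beta> k + (if k = k0 then c else 0)"])
qed

lemma psd_trace_one_if_in_convex_hull_outer:
  fixes M :: "real^'k^'k"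
  assumes "M \<in> convex hull ((\<lambda>z. outer z z) ` sphere 0 1)"
  shows "\<forall>z. 0 \<le> M \<bullet> outer z z" "trace M = 1"
proof -
  define G where "G = {M :: real^'k^'k. (\<forall>z. 0 \<le> M \<bullet> outer z z) \<and> trace M = 1}"
  have convG: "convex G"
    unfolding G_def convex_def
    by (auto simp: inner_add_left trace_add trace_def sum.distrib sum_distrib_left[symmetric]
        intro!: add_nonneg_nonneg mult_nonneg_nonneg)
  have "(\<lambda>z. outer z z) ` sphere 0 1 \<subseteq> G"
  proof clarify
    fix u :: "real^'k" assume "u \<in> sphere 0 1"
    hence "u \<bullet> u = 1" by (simp add: dot_square_norm)
    moreover have "trace (outer u u) = u \<bullet> u"
      by (simp add: trace_def outer_def inner_vec_def inner_real_def)
    ultimately show "outer u u \<in> G"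
      unfolding G_def by (simp add: inner_outer outer_mult) (metis inner_commute zero_le_square)
  qed
  hence "convex hull ((\<lambda>z. outer z z) ` sphere 0 1) \<subseteq> G"
    using convG by (rule hull_minimal)
  with assms show "\<forall>z. 0 \<le> M \<bullet> outer z z" "trace M = 1" unfolding G_def by auto
qed

lemma annihilator_positive_on_outer_squares:
  fixes V :: "(real^'k^'k) set"
  assumes V: "subspace V" and disj: "V \<inter> convex hull ((\<lambda>z. outer z z) ` sphere 0 1) = {}"
  obtains A where "\<And>M. M \<in> V \<Longrightarrow> A \<bullet> M = 0" "\<And>z. z \<noteq> 0 \<Longrightarrow> 0 < A \<bullet> outer z z"
proof -
  define C where "C = convex hull ((\<lambda>z. outer z z) ` sphere (0 :: real^'k) 1)"
  have "convex C" unfolding C_def by (rule convex_convex_hull)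
  moreover have "compact C"
    unfolding C_def outer_def
    by (intro compact_convex_hull compact_continuous_image compact_sphere continuous_intros)
  moreover have "C \<noteq> {}"
  proof -
    obtain u :: "real^'k" where "norm u = 1" using vector_choose_size[of 1] by auto
    thus ?thesis unfolding C_def convex_hull_eq_empty by auto
  qed
  moreover note disj[folded C_def]
  ultimately obtain A b where AV: "\<And>x. x \<in> V \<Longrightarrow> A \<bullet> x < b" and AC: "\<And>x. x \<in> C \<Longrightarrow> A \<bullet> x > b"
    by (metis separating_hyperplane_closed_compact subspace_imp_convex[OF V] closed_subspace[OF V])
  have "0 < b" using AV[of 0] V by (simp add: subspace_0)
  have "A \<bullet> M = 0" if "M \<in> V" for M
  proof (rule ccontr)
    assume "A \<bullet> M \<noteq> 0"
    moreover have "(b / (A \<bullet> M)) *\<^sub>R M \<in> V" using V that by (simp add: subspace_scale)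
    ultimately show False using AV[of "(b / (A \<bullet> M)) *\<^sub>R M"] by simp
  qed
  moreover have "0 < A \<bullet> outer z z" if "z \<noteq> 0" for z
  proof -
    define u where "u = z /\<^sub>R norm z"
    have "u \<in> sphere 0 1" using that by (simp add: u_def)
    hence "outer u u \<in> C" unfolding C_def by (intro hull_inc imageI)
    hence "0 < A \<bullet> outer u u" using AC[of "outer u u"] \<open>0 < b\<close> by linarith
    also have "A \<bullet> outer u u = (inverse (norm z))\<^sup>2 * (A \<bullet> outer z z)"
      by (simp add: u_def inner_outer matrix_vector_mult_scaleR power2_eq_square)
    finally show ?thesis by (simp add: zero_less_mult_iff)
  qed
  ultimately show thesis by (rule that)
qed

lemma exists_inner_product_matrix_orthogonal_to_forms:
  fixes Q :: "'i \<Rightarrow> real^'k^'k"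
  assumes fin: "finite I"
    and no_psd: "\<And>\<beta> z. \<forall>x. 0 \<le> (\<Sum>k\<in>I. \<beta> k * (x \<bullet> (Q k *v x)))
                   \<Longrightarrow> (\<Sum>k\<in>I. \<beta> k * (z \<bullet> (Q k *v z))) = 0"
  shows "\<exists>S. inner_product_form (\<lambda>x y. x \<bullet> (S *v y)) \<and> (\<forall>k\<in>I. S \<bullet> Q k = 0)"
proof -
  define Qs where "Qs k = (1/2) *\<^sub>R (Q k + transpose (Q k))" for k
  have Qs_outer: "Qs k \<bullet> outer z z = z \<bullet> (Q k *v z)" for k z
  proof -
    have "transpose (Q k) \<bullet> outer z z = Q k \<bullet> outer z z"
      unfolding inner_transpose transpose_outer ..
    hence "Qs k \<bullet> outer z z = Q k \<bullet> outer z z"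
      by (simp only: Qs_def inner_scaleR_left inner_add_left) simp
    thus ?thesis by (simp only: inner_outer)
  qed
  define C where "C = convex hull ((\<lambda>z. outer z z) ` sphere (0 :: real^'k) 1)"
  have "span (Qs ` I) \<inter> C = {}"
  proof (rule ccontr)
    assume "span (Qs ` I) \<inter> C \<noteq> {}"
    then obtain M where MV: "M \<in> span (Qs ` I)" and MC: "M \<in> C" by blast
    obtain \<beta> where M: "M = (\<Sum>k\<in>I. \<beta> k *\<^sub>R Qs k)"
      using span_image_representation[OF fin MV] by blast
    have M_outer: "M \<bullet> outer z z = (\<Sum>k\<in>I. \<beta> k * (z \<bullet> (Q k *v z)))" for z
      by (simp add: M inner_sum_left Qs_outer)
    have "\<forall>x. 0 \<le> (\<Sum>k\<in>I. \<beta> k * (x \<bullet> (Q k *v x)))"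
      using psd_trace_one_if_in_convex_hull_outer(1)[OF MC[unfolded C_def]] by (simp add: M_outer)
    hence "(\<Sum>k\<in>I. \<beta> k * (z \<bullet> (Q k *v z))) = 0" for z by (rule no_psd)
    hence "M \<bullet> outer z z = 0" for z by (simp add: M_outer)
    hence "trace M = 0" unfolding trace_eq_sum_inner_outer_axis by simp
    thus False using psd_trace_one_if_in_convex_hull_outer(2)[OF MC[unfolded C_def]] by simp
  qed
  then obtain A where A_V: "\<And>M. M \<in> span (Qs ` I) \<Longrightarrow> A \<bullet> M = 0"
    and A_pos: "\<And>z. z \<noteq> 0 \<Longrightarrow> 0 < A \<bullet> outer z z"
    using annihilator_positive_on_outer_squares[OF subspace_span] unfolding C_def by blast
  txt \<open>Since \<open>A \<bullet> Q^T = A^T \<bullet> Q\<close>, the symmetric \<open>S\<close> annihilates \<open>Q k\<close> because \<open>A\<close>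
    annihilates its symmetric part \<open>Qs k\<close>.\<close>
  define S where "S = A + transpose A"
  have S_inner: "S \<bullet> M = A \<bullet> M + A \<bullet> transpose M" for M
    by (simp add: S_def inner_add_left inner_transpose)
  have "transpose S = S" by (simp add: S_def transpose_def vec_eq_iff add.commute)
  moreover have "0 < x \<bullet> (S *v x)" if "x \<noteq> 0" for x
    using A_pos[OF that] by (simp add: inner_outer[symmetric] S_inner transpose_outer)
  moreover have "S \<bullet> Q k = 0" if "k \<in> I" for k
  proof -
    have "A \<bullet> Qs k = 0" using that by (intro A_V) (simp add: span_base)
    thus ?thesis by (simp add: S_inner Qs_def inner_add_right)
  qed
  ultimately show ?thesis using inner_product_form_matrixI by blast
qed

section \<open>The 2x2 minors on the range of \<open>PK\<close>\<close>

definition minor_matrix :: "('m \<Rightarrow> 'n \<Rightarrow> real^'k) \<Rightarrow> 'm \<times> 'm \<times> 'n \<times> 'n \<Rightarrow> real^'k^'k" where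
  "minor_matrix a k = (case k of (i1, i2, j1, j2) \<Rightarrow>
     outer (a i1 j1) (a i2 j2) - outer (a i1 j2) (a i2 j1))"

lemma minor2_PK: "minor2 k (PK a z) = z \<bullet> (minor_matrix a k *v z)"
  by (cases k) (simp add: minor2_def PK_def minor_matrix_def matrix_vector_mult_diff_rdistrib
      outer_mult inner_diff_right inner_commute)

lemma inner_minor_matrix:
  "S \<bullet> minor_matrix a (i1, i2, j1, j2) = a i1 j1 \<bullet> (S *v a i2 j2) - a i1 j2 \<bullet> (S *v a i2 j1)"
  by (simp add: minor_matrix_def inner_diff_right inner_outer)

lemma minor_relations_all_indices:
  fixes a :: "'m::linorder \<Rightarrow> 'n::linorder \<Rightarrow> 'a"
  assumes B_sym: "\<And>x y. B x y = B y x"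
    and rel: "\<And>i1 i2 j1 j2. i1 < i2 \<Longrightarrow> j1 < j2 \<Longrightarrow> B (a i1 j1) (a i2 j2) = B (a i1 j2) (a i2 j1)"
  shows "B (a i j) (a i' l) = B (a i l) (a i' j)"
proof (induction i i' arbitrary: j l rule: linorder_less_wlog)
  case (less i i')
  show ?case by (induction j l rule: linorder_less_wlog) (use less rel in auto)
next
  case (refl i)
  show ?case by (rule B_sym)
next
  case (sym i i')
  then show ?case using B_sym by metis
qed

lemma transpose_PK: "transpose (PK a z) = PK (\<lambda>j i. a i j) z"
  by (simp add: transpose_def PK_def)

lemma rank_one_in_range_PK_if_spanning_row:
  fixes S :: "real^3^3" and a :: "'m::finite \<Rightarrow> 'n::finite \<Rightarrow> real^3"
  assumes S: "inner_product_form (\<lambda>x y. x \<bullet> (S *v y))"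
    and rel: "\<And>i i' j l. a i j \<bullet> (S *v a i' l) = a i l \<bullet> (S *v a i' j)"
    and sp: "span (range (a i0)) = UNIV"
  shows "\<exists>z. rank (PK a z) = 1"
proof -
  obtain y where "y \<noteq> 0" and y: "\<And>i. \<exists>c. \<forall>l. a i l \<bullet> (S *v y) = c * (a i0 l \<bullet> (S *v y))"
    using exists_direction_with_proportional_rows[of _ a i0, OF S rel sp] by blast
  define z where "z = S *v y"
  have "z \<noteq> 0" using inner_product_formD(3)[OF S \<open>y \<noteq> 0\<close>] by (auto simp: z_def)
  have "PK a z $ i0 \<noteq> 0"
  proof
    assume "PK a z $ i0 = 0"
    hence "a i0 l \<bullet> z = 0" for l by (simp add: PK_def vec_eq_iff)
    hence "orthogonal z z"
      by (intro orthogonal_to_span[of z "range (a i0)"]) (auto simp: sp orthogonal_def inner_commute[of z])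
    thus False using \<open>z \<noteq> 0\<close> by (simp add: orthogonal_self)
  qed
  moreover have "\<exists>t. PK a z $ i = t *\<^sub>R PK a z $ i0" for i
    using y[of i] by (auto simp: PK_def vec_eq_iff z_def)
  ultimately show ?thesis using rank_one_if_rows_proportional by blast
qed

lemma rank_one_in_range_PK:
  fixes S :: "real^3^3" and a :: "'m::finite \<Rightarrow> 'n::finite \<Rightarrow> real^3"
  assumes S: "inner_product_form (\<lambda>x y. x \<bullet> (S *v y))"
    and rel: "\<And>i i' j l. a i j \<bullet> (S *v a i' l) = a i l \<bullet> (S *v a i' j)"
    and "(\<exists>i0. dim (span (range (\<lambda>l. a i0 l))) = 3) \<or> (\<exists>j0. dim (span (range (\<lambda>l. a l j0))) = 3)"
  shows "\<exists>z. rank (PK a z) = 1"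
  using assms(3)
proof (elim disjE exE)
  fix i0 assume "dim (span (range (\<lambda>l. a i0 l))) = 3"
  hence "span (range (a i0)) = UNIV" using dim_eq_full[of "range (a i0)"] by (simp add: dim_span)
  thus ?thesis by (rule rank_one_in_range_PK_if_spanning_row[OF S rel])
next
  fix j0 assume "dim (span (range (\<lambda>l. a l j0))) = 3"
  hence "span (range (\<lambda>l. a l j0)) = UNIV"
    using dim_eq_full[of "range (\<lambda>l. a l j0)"] by (simp add: dim_span)
  moreover have "a i j \<bullet> (S *v a l j') = a l j \<bullet> (S *v a i j')" for i l j j'
  proof -
    have "a i j \<bullet> (S *v a l j') = a i j' \<bullet> (S *v a l j)" by (rule rel)
    also have "\<dots> = a l j \<bullet> (S *v a i j')" by (rule inner_product_formD(2)[OF S])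
    finally show ?thesis .
  qed
  ultimately obtain z where "rank (PK (\<lambda>j i. a i j) z) = 1"
    using rank_one_in_range_PK_if_spanning_row[OF S, of "\<lambda>j i. a i j" j0] by blast
  thus ?thesis by (metis transpose_PK rank_transpose)
qed

theorem lemma7:
  fixes K :: "(real^'n::{finite,linorder}^'m::{finite,linorder}) set"
    and a :: "'m \<Rightarrow> 'n \<Rightarrow> real^3"
  assumes "subspace K" and "dim K = 3"
    and "\<not> has_rank1_connections K"
    and "K = range (PK a)" and "inj (PK a)"
    and "(\<exists>i0. dim (span (range (\<lambda>l. a i0 l))) = 3) \<or>
         (\<exists>j0. dim (span (range (\<lambda>l. a l j0))) = 3)"
  shows "\<exists>\<beta> :: ('m \<times> 'm \<times> 'n \<times> 'n) \<Rightarrow> real.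
           (\<exists>k\<in>minor_idx. \<beta> k \<noteq> 0) \<and>
           (\<forall>X\<in>K. (\<Sum>k\<in>minor_idx. \<beta> k * minor2 k X) \<ge> 0) \<and>
           (\<exists>X\<in>K. (\<Sum>k\<in>minor_idx. \<beta> k * minor2 k X) \<noteq> 0)"
proof (cases "\<exists>\<beta> z. (\<forall>x. 0 \<le> (\<Sum>k\<in>minor_idx. \<beta> k * minor2 k (PK a x)))
                   \<and> (\<Sum>k\<in>minor_idx. \<beta> k * minor2 k (PK a z)) \<noteq> 0")
  case True
  then obtain \<beta> z where psd: "\<forall>x. 0 \<le> (\<Sum>k\<in>minor_idx. \<beta> k * minor2 k (PK a x))"
    and nz: "(\<Sum>k\<in>minor_idx. \<beta> k * minor2 k (PK a z)) \<noteq> 0" by blast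
  from nz have "\<exists>k\<in>minor_idx. \<beta> k \<noteq> 0" by (auto intro: sum.neutral)
  with psd nz show ?thesis unfolding assms(4) by blast
next
  case False
  then obtain S where S: "inner_product_form (\<lambda>x y. x \<bullet> (S *v y))"
    and orth: "\<forall>k\<in>minor_idx. S \<bullet> minor_matrix a k = 0"
    using exists_inner_product_matrix_orthogonal_to_forms[of minor_idx "minor_matrix a", OF finite]
    by (auto simp: minor2_PK)
  have "a i1 j1 \<bullet> (S *v a i2 j2) = a i1 j2 \<bullet> (S *v a i2 j1)" if "i1 < i2" "j1 < j2" for i1 i2 j1 j2
    using orth[rule_format, of "(i1, i2, j1, j2)"] that by (simp add: minor_idx_def inner_minor_matrix)
  with inner_product_formD(2)[OF S]
  have "a i j \<bullet> (S *v a i' l) = a i l \<bullet> (S *v a i' j)" for i i' j l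
    by (rule minor_relations_all_indices)
  then obtain z where "rank (PK a z) = 1" using rank_one_in_range_PK[OF S _ assms(6)] by blast
  moreover from this have "PK a z \<noteq> 0" by auto
  moreover have "PK a z \<in> K" "0 \<in> K" using assms(1,4) by (auto simp: subspace_0)
  ultimately have "has_rank1_connections K" unfolding has_rank1_connections_def by force
  with assms(3) show ?thesis by blast
qed

end
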